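(* For all integers $r\ge0$ and $\nu\ge0$, $$E^{(2r+1)}_{2\nu}=\frac{1}{(2r)!}\sum_{\rho=0}^{r}(-1)^\rho\,\mathcal G^r_\rho\,E_{2\nu+2\rho}.$$
   Context: Generalised Euler numbers $E^{(m)}_{2\nu}$ are defined by $\operatorname{sech}^m x=\sum_{\nu\ge0}E^{(m)}_{2\nu}\,x^{2\nu}/(2\nu)!$, and $E_{2\nu}=E^{(1)}_{2\nu}$ are the Euler numbers. The integers $\mathcal G^r_\rho$ ($0\le\rho\le r$) are defined by $\mathcal G^0_0=1$, $\mathcal G^r_{-1}=\mathcal G^r_{r+1}=0$, and $\mathcal G^r_\rho=(2r-1)^2\mathcal G^{r-1}_\rho+\mathcal G^{r-1}_{\rho-1}$ for $r\ge1$. *)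

theory Defs
  imports "HOL-Computational_Algebra.Formal_Power_Series"
begin

definition fps_cosh_real :: "real fps" where
  "fps_cosh_real = fps_const (1/2) * (fps_exp 1 + fps_exp (-1))"

definition fps_sech_pow :: "nat \<Rightarrow> real fps" where
  "fps_sech_pow m = (inverse fps_cosh_real) ^ m"

(* generalised Euler numbers: sech^m x = \<Sum> E^(m)_k x^k / k! ; E^(m)_{2\<nu>} = gen_euler m (2\<nu>) *)
definition gen_euler :: "nat \<Rightarrow> nat \<Rightarrow> real" where
  "gen_euler m k = fact k * fps_nth (fps_sech_pow m) k"

definition euler_num :: "nat \<Rightarrow> real" where
  "euler_num k = gen_euler 1 k"

(* G r \<rho> = \<G>^r_\<rho>; G^0_0 = 1, G^0_\<rho> = 0 for \<rho> > 0, G^r_{-1} = 0 *)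
fun G :: "nat \<Rightarrow> nat \<Rightarrow> int" where
  "G 0 \<rho> = (if \<rho> = 0 then 1 else 0)"
| "G (Suc r) \<rho> = (2 * int (Suc r) - 1)^2 * G r \<rho> + (if \<rho> = 0 then 0 else G r (\<rho> - 1))"

end

theory Submission imports Defs begin

text \<open>
  With \<open>S = sech x\<close> and \<open>T = tanh x\<close> one has \<open>S' = -T S\<close>, \<open>T' = S^2\<close> and
  \<open>T^2 = 1 - S^2\<close>, hence \<open>(S^m)'' = m^2 S^m - m(m+1) S^(m+2)\<close>. Comparing coefficients,
  \<open>m(m+1) E^(m+2)_n = m^2 E^(m)_n - E^(m)_(n+2)\<close>: the order is raised by two at the cost of
  a shift in \<open>n\<close>. Raising the order from \<open>1\<close> to \<open>2r+1\<close> in this way, the coefficients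
  accumulate according to the recursion defining \<open>\<G>^r_\<rho>\<close>, and the denominators
  \<open>m(m+1)\<close> for \<open>m = 1, 3, \<dots>, 2r-1\<close> multiply to \<open>(2r)!\<close>.
\<close>

unbundle fps_syntax

definition fps_sinh_real :: "real fps" where
  "fps_sinh_real = fps_const (1/2) * (fps_exp 1 - fps_exp (-1))"

lemma fps_cosh_real_nth_0 [simp]: "fps_cosh_real $ 0 = 1"
  by (simp add: fps_cosh_real_def)

lemma fps_deriv_cosh_real: "fps_deriv fps_cosh_real = fps_sinh_real"
  by (simp add: fps_cosh_real_def fps_sinh_real_def algebra_simps flip: fps_const_neg)

lemma fps_deriv_sinh_real: "fps_deriv fps_sinh_real = fps_cosh_real"
  by (simp add: fps_cosh_real_def fps_sinh_real_def algebra_simps flip: fps_const_neg)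

lemma fps_cosh_sq_minus_sinh_sq: "fps_cosh_real^2 - fps_sinh_real^2 = 1"
proof -
  have exp_inverse: "fps_exp (1::real) * fps_exp (-1) = 1"
    by (metis add.right_inverse fps_exp_add_mult fps_exp_0)
  have "4 * (fps_const (1/2) * fps_const (1/2) :: real fps) = fps_const (4 * (1/2 * (1/2)))"
    by (simp only: fps_const_mult numeral_fps_const)
  then have quarter: "4 * (fps_const (1/2) * fps_const (1/2) :: real fps) = 1"
    by simp
  show ?thesis
    using exp_inverse quarter
    by (simp add: fps_cosh_real_def fps_sinh_real_def power2_eq_square algebra_simps
        flip: fps_const_mult)
qed

lemma fps_deriv_deriv_sech_pow:
  "fps_deriv (fps_deriv (fps_sech_pow m)) =
     fps_const (real (m^2)) * fps_sech_pow m - fps_const (real (m * (m+1))) * fps_sech_pow (m+2)"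
proof -
  define S where "S = inverse fps_cosh_real"
  define T where "T = fps_sinh_real * S"
  have S_cosh: "S * fps_cosh_real = 1"
    unfolding S_def by (rule inverse_mult_eq_1) simp
  have deriv_S: "fps_deriv S = - fps_sinh_real * S^2"
    using fps_inverse_deriv[of fps_cosh_real] by (simp add: S_def fps_deriv_cosh_real)
  have deriv_S_pow: "fps_deriv (S^k) = - of_nat k * T * S^k" for k
  proof (cases k)
    case (Suc j)
    then show ?thesis
      using fps_deriv_power'[of S "Suc j"] deriv_S
      by (simp add: T_def power2_eq_square algebra_simps)
  qed simp
  have T_sq: "T^2 = 1 - S^2"
  proof -
    have "T^2 = (fps_cosh_real^2 - 1) * S^2"
      using fps_cosh_sq_minus_sinh_sq by (simp add: T_def power_mult_distrib algebra_simps)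
    also have "\<dots> = (S * fps_cosh_real)^2 - S^2"
      by (simp add: algebra_simps power_mult_distrib)
    finally show ?thesis
      using S_cosh by simp
  qed
  have deriv_T: "fps_deriv T = S^2"
  proof -
    have "fps_deriv T = fps_cosh_real * S - T^2"
      using deriv_S by (simp add: T_def fps_deriv_sinh_real power2_eq_square algebra_simps)
    then show ?thesis
      using S_cosh T_sq by (simp add: algebra_simps)
  qed
  have "fps_deriv (fps_deriv (S^m)) = - of_nat m * (S^2 * S^m - of_nat m * T^2 * S^m)"
    using deriv_S_pow deriv_T by (simp add: algebra_simps power2_eq_square)
  also have "\<dots> = of_nat (m^2) * S^m - of_nat (m * (m+1)) * S^(m+2)"
    unfolding T_sq by (simp add: algebra_simps power2_eq_square power_add)
  finally show ?thesis
    by (simp add: fps_sech_pow_def S_def flip: fps_of_nat)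
qed

lemma gen_euler_add_2:
  "gen_euler m (n+2) = real (m^2) * gen_euler m n - real (m * (m+1)) * gen_euler (m+2) n"
proof -
  have "real (n+1) * (real (n+2) * fps_sech_pow m $ (n+2)) =
      real (m^2) * fps_sech_pow m $ n - real (m * (m+1)) * fps_sech_pow (m+2) $ n"
    using arg_cong[OF fps_deriv_deriv_sech_pow, of "\<lambda>f. f $ n" m]
    by (simp del: of_nat_mult of_nat_power)
  then have "fact n * (real (n+1) * (real (n+2) * fps_sech_pow m $ (n+2))) =
      fact n * (real (m^2) * fps_sech_pow m $ n - real (m * (m+1)) * fps_sech_pow (m+2) $ n)"
    by simp
  moreover have "fact (n+2) = (fact n * (real (n+1) * real (n+2)) :: real)"
    by (simp add: algebra_simps)
  ultimately show ?thesis
    unfolding gen_euler_def by (simp add: algebra_simps)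
qed

lemma gen_euler_lift_order:
  assumes "m > 0"
  shows "gen_euler (m+2) n =
           (real (m^2) * gen_euler m n - gen_euler m (n+2)) / real (m * (m+1))"
proof -
  have "real (m * (m+1)) \<noteq> 0"
    unfolding of_nat_eq_0_iff using assms by simp
  then show ?thesis
    using gen_euler_add_2[of m n] by (simp add: eq_divide_eq algebra_simps)
qed

lemma G_eq_0_if_gt: "r < \<rho> \<Longrightarrow> G r \<rho> = 0"
  by (induction r arbitrary: \<rho>) auto

lemma G_alternating_sum_Suc:
  fixes f :: "nat \<Rightarrow> real"
  shows "(\<Sum>\<rho>=0..Suc r. (-1)^\<rho> * of_int (G (Suc r) \<rho>) * f \<rho>) =
           real ((2*r+1)^2) * (\<Sum>\<rho>=0..r. (-1)^\<rho> * of_int (G r \<rho>) * f \<rho>)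
           - (\<Sum>\<rho>=0..r. (-1)^\<rho> * of_int (G r \<rho>) * f (\<rho>+1))"
proof -
  have scaled: "(\<Sum>\<rho>=0..Suc r. (-1)^\<rho> * of_int ((2 * int (Suc r) - 1)^2 * G r \<rho>) * f \<rho>) =
      real ((2*r+1)^2) * (\<Sum>\<rho>=0..r. (-1)^\<rho> * of_int (G r \<rho>) * f \<rho>)"
    by (simp add: G_eq_0_if_gt sum_distrib_left algebra_simps)
  have shifted: "(\<Sum>\<rho>=0..Suc r. (-1)^\<rho> * of_int (if \<rho> = 0 then 0 else G r (\<rho> - 1)) * f \<rho>) =
      - (\<Sum>\<rho>=0..r. (-1)^\<rho> * of_int (G r \<rho>) * f (\<rho>+1))"
    by (subst sum.atLeast0_atMost_Suc_shift)
       (simp add: sum_negf del: sum.atLeast0_atMost_Suc)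
  show ?thesis
    unfolding G.simps of_int_add distrib_left distrib_right sum.distrib scaled shifted
    by simp
qed

theorem mainTheorem4:
  fixes r \<nu> :: nat
  shows "gen_euler (2*r+1) (2*\<nu>) =
    (1 / fact (2*r)) * (\<Sum>\<rho>=0..r. (-1)^\<rho> * of_int (G r \<rho>) * euler_num (2*\<nu> + 2*\<rho>))"
proof (induction r arbitrary: \<nu>)
  case 0
  then show ?case by (simp add: euler_num_def)
next
  case (Suc r)
  define m where "m = 2*r+1"
  define A where "A \<nu> = (\<Sum>\<rho>=0..r. (-1)^\<rho> * of_int (G r \<rho>) * euler_num (2*\<nu> + 2*\<rho>))" for \<nu>
  have IH: "gen_euler m (2*k) = A k / fact (2*r)" for k
    using Suc.IH[of k] by (simp add: A_def m_def)
  have "gen_euler (2 * Suc r + 1) (2*\<nu>) =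
      (real (m^2) * gen_euler m (2*\<nu>) - gen_euler m (2*(\<nu>+1))) / real (m * (m+1))"
    using gen_euler_lift_order[of m "2*\<nu>"] by (simp add: m_def)
  also have "\<dots> = (real (m^2) * A \<nu> - A (\<nu>+1)) / fact (2 * Suc r)"
    unfolding IH by (simp add: m_def diff_divide_distrib algebra_simps)
  also have "real (m^2) * A \<nu> - A (\<nu>+1) =
      (\<Sum>\<rho>=0..Suc r. (-1)^\<rho> * of_int (G (Suc r) \<rho>) * euler_num (2*\<nu> + 2*\<rho>))"
    using G_alternating_sum_Suc[of r "\<lambda>\<rho>. euler_num (2*\<nu> + 2*\<rho>)"]
    by (simp add: A_def m_def algebra_simps)
  finally show ?case by simp
qed

end
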